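(* Let $n,t,t'$ be positive integers with $n\ge t+12$ and $\prod_{j=n-t'+1}^{n} j\ge 2(t+2)(2t+1)t^2$, and let $m\ge0$ be an integer. Then there exist a map $\mathcal{E}_r:\mathcal{S}_n\to\mathcal{S}_{n+t'+1}$ and a decoding map $\mathcal{D}$ such that for every $\sigma\in\mathcal{S}_n$ and every sequence $\pi_e$ obtained from $\pi=\mathcal{E}_r(\sigma)$ by a single rank-modulation stuck-at error with parameters $t,m$ (as defined in the context), we have $\mathcal{D}(\pi_e)=\sigma$.
   Context: $\mathcal{S}_N$ denotes the set of permutations $\pi=(\pi(1),\ldots,\pi(N))$ of $[N]=\{1,\ldots,N\}$. Rank-modulation stuck-at error with parameters $t,m$: $\pi_e$ is obtained from $\pi\in\mathcal{S}_N$ if there exist a position $i_1\in[N]$ with $\pi(i_1)>m$ and $t_1\in[t]$ such that $\pi_e(i_1)=\pi(i_1)-t_1$, $\pi_e(i)=\pi(i)-1$ for all $i$ with $\pi(i)>\pi(i_1)$, and $\pi_e(i)=\pi(i)$ for all other $i$. *)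

theory Defs
  imports Main
begin

text \<open>Permutations of [N], represented as lists (pi(1),...,pi(N)) of integers
  (positions are 0-based list indices).\<close>
definition perms :: "nat \<Rightarrow> int list set" where
  "perms N = {xs. length xs = N \<and> distinct xs \<and> set xs = {1..int N}}"

definition stuck_at_error :: "nat \<Rightarrow> int \<Rightarrow> int list \<Rightarrow> int list \<Rightarrow> bool" where
  "stuck_at_error t m p pe \<longleftrightarrow>
     length pe = length p \<and>
     (\<exists>i1 < length p. p ! i1 > m \<and>
        (\<exists>t1 \<in> {1..int t}.
           pe ! i1 = p ! i1 - t1 \<and>
           (\<forall>i < length p. p ! i > p ! i1 \<longrightarrow> pe ! i = p ! i - 1) \<and>
           (\<forall>i < length p. i \<noteq> i1 \<and> \<not> p ! i > p ! i1 \<longrightarrow> pe ! i = p ! i)))"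

end

theory Submission
  imports Defs "HOL-Combinatorics.Multiset_Permutations"
begin

(* A stuck-at error is determined by its position i and shift s, and it can be undone once
   (i, s) is known. If p and q in S_N have a common erroneous image, with errors at i in p
   and at j in q, then j = i or j is the position where p holds p(i) - s. So each permutation
   is confusable with at most 2 N t^2 permutations, and a greedy choice gives N!/(2 N t^2 + 1)
   pairwise non-confusable permutations. For N = n + t' + 1 this is at least n! as soon as
   (n+1)...(n+t') > 2 t^2, which follows from the product hypothesis; any injection of S_n
   into such a code is decodable. This replaces the paper's explicit encoder by counting. *)

lemma perms_eq_permutations_of_set: "perms N = permutations_of_set {1..int N}"
  unfolding perms_def permutations_of_set_def
  using distinct_card by fastforce

lemma finite_perms: "finite (perms N)"
  by (simp add: perms_eq_permutations_of_set)

lemma card_perms: "card (perms N) = fact N"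
  by (simp add: perms_eq_permutations_of_set)

lemma perms_nth_in_range: "p \<in> perms N \<Longrightarrow> k < N \<Longrightarrow> p ! k \<in> {1..int N}"
  unfolding perms_def using nth_mem by blast

definition apply_stuck_at :: "int list \<Rightarrow> nat \<Rightarrow> int \<Rightarrow> int list" where
  "apply_stuck_at p i s = (map (\<lambda>x. if x > p ! i then x - 1 else x) p)[i := p ! i - s]"

definition undo_stuck_at :: "int list \<Rightarrow> nat \<Rightarrow> int \<Rightarrow> int list" where
  "undo_stuck_at pe i s = (map (\<lambda>x. if x \<ge> pe ! i + s then x + 1 else x) pe)[i := pe ! i + s]"

lemma length_apply_stuck_at [simp]: "length (apply_stuck_at p i s) = length p"
  by (simp add: apply_stuck_at_def)

lemma nth_apply_stuck_at:
  "k < length p \<Longrightarrow> apply_stuck_at p i s ! k =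
     (if k = i then p ! i - s else if p ! k > p ! i then p ! k - 1 else p ! k)"
  by (simp add: apply_stuck_at_def nth_list_update)

lemma stuck_at_errorE:
  assumes "stuck_at_error t m p pe"
  obtains i s where "i < length p" "s \<in> {1..int t}" "pe = apply_stuck_at p i s"
proof -
  from assms obtain i s where i: "i < length p" and s: "s \<in> {1..int t}" and
    err: "length pe = length p" "pe ! i = p ! i - s"
      "\<forall>k < length p. p ! k > p ! i \<longrightarrow> pe ! k = p ! k - 1"
      "\<forall>k < length p. k \<noteq> i \<and> \<not> p ! k > p ! i \<longrightarrow> pe ! k = p ! k"
    unfolding stuck_at_error_def by blast
  from err have "pe = apply_stuck_at p i s"
    by (intro nth_equalityI) (auto simp: nth_apply_stuck_at)
  with i s show thesis by (rule that)
qed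

lemma undo_apply_stuck_at:
  assumes "distinct p" "i < length p"
  shows "undo_stuck_at (apply_stuck_at p i s) i s = p"
proof (rule nth_equalityI)
  fix k assume "k < length (undo_stuck_at (apply_stuck_at p i s) i s)"
  then have k: "k < length p" by (simp add: undo_stuck_at_def)
  show "undo_stuck_at (apply_stuck_at p i s) i s ! k = p ! k"
  proof (cases "k = i")
    case False
    then have "p ! k \<noteq> p ! i" using assms k by (simp add: nth_eq_iff_index_eq)
    then show ?thesis
      using assms(2) k False by (auto simp: undo_stuck_at_def nth_apply_stuck_at)
  qed (use assms(2) in \<open>simp add: undo_stuck_at_def nth_apply_stuck_at\<close>)
qed (simp add: undo_stuck_at_def)

lemma apply_stuck_at_nth_neq:
  assumes "distinct p" "i < length p" "k < length p" "l < length p" "k \<noteq> i" "l \<noteq> i" "k \<noteq> l"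
  shows "apply_stuck_at p i s ! k \<noteq> apply_stuck_at p i s ! l"
proof -
  have "p ! k \<noteq> p ! l" "p ! k \<noteq> p ! i" "p ! l \<noteq> p ! i"
    using assms by (simp_all add: nth_eq_iff_index_eq)
  then show ?thesis using assms by (auto simp: nth_apply_stuck_at)
qed

lemma apply_stuck_at_nth_pos:
  assumes "\<forall>x \<in> set p. 1 \<le> x" "i < length p" "k < length p" "k \<noteq> i"
  shows "1 \<le> apply_stuck_at p i s ! k"
proof -
  have "1 \<le> p ! i" "1 \<le> p ! k" using assms by simp_all
  then show ?thesis using assms(3,4) by (simp add: nth_apply_stuck_at)
qed

(* pe ! l = p ! l = pe ! i for the position l of p ! i - s, while q's error leaves only
   position j as a possible repeated entry of pe. *)
lemma apply_stuck_at_collision: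
  assumes p: "p \<in> perms N" and q: "q \<in> perms N" and "1 \<le> s" "i < N" "j < N" "j \<noteq> i"
    and eq: "apply_stuck_at p i s = apply_stuck_at q j r"
  shows "p ! j = p ! i - s"
proof -
  have lens: "length p = N" "length q = N" and "distinct q" and setp: "set p = {1..int N}"
    using p q by (simp_all add: perms_def)
  have "1 \<le> apply_stuck_at p i s ! i"
    unfolding eq using q assms(4-6) by (intro apply_stuck_at_nth_pos) (auto simp: perms_def)
  moreover have "p ! i \<le> int N" using perms_nth_in_range[OF p \<open>i < N\<close>] by simp
  ultimately have "p ! i - s \<in> set p"
    using \<open>1 \<le> s\<close> \<open>i < N\<close> lens setp by (simp add: nth_apply_stuck_at)
  then obtain l where l: "l < N" "p ! l = p ! i - s" by (metis lens(1) in_set_conv_nth)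
  have "l \<noteq> i" using l \<open>1 \<le> s\<close> by auto
  have "apply_stuck_at q j r ! l = apply_stuck_at q j r ! i"
    unfolding eq[symmetric] using l \<open>l \<noteq> i\<close> \<open>1 \<le> s\<close> \<open>i < N\<close> lens
    by (simp add: nth_apply_stuck_at)
  then have "l = j"
    using apply_stuck_at_nth_neq[OF \<open>distinct q\<close>, of j l i r] l \<open>l \<noteq> i\<close> assms(4-6) lens
    by auto
  with l show ?thesis by simp
qed

definition confusable :: "('a \<Rightarrow> 'b \<Rightarrow> bool) \<Rightarrow> 'a \<Rightarrow> 'a \<Rightarrow> bool" where
  "confusable err x y \<longleftrightarrow> (\<exists>z. err x z \<and> err y z)"

lemma symp_confusable: "symp (confusable err)"
  unfolding confusable_def by (auto intro: sympI)

lemma card_confusable_perms_le: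
  assumes p: "p \<in> perms N"
  shows "card {q \<in> perms N. confusable (stuck_at_error t m) p q} \<le> 2 * N * t^2"
proof -
  \<comment> \<open>q is recovered from (i, s, j = i, r), since otherwise j is the position of p ! i - s\<close>
  define partner where "partner = inv_into {..<N} ((!) p)"
  define F where "F = (\<lambda>(i, s, b, r).
    undo_stuck_at (apply_stuck_at p i s) (if b then i else partner (p ! i - s)) r)"
  define D where "D = {..<N} \<times> {1..int t} \<times> (UNIV :: bool set) \<times> {1..int t}"
  have "{q \<in> perms N. confusable (stuck_at_error t m) p q} \<subseteq> F ` D"
  proof safe
    fix q assume q: "q \<in> perms N" and "confusable (stuck_at_error t m) p q"
    then obtain pe where "stuck_at_error t m p pe" "stuck_at_error t m q pe"
      unfolding confusable_def by blast
    then obtain i s j r where i: "i < N" and s: "s \<in> {1..int t}"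
      and j: "j < N" and r: "r \<in> {1..int t}"
      and eq: "apply_stuck_at p i s = apply_stuck_at q j r"
      using p q by (auto simp: perms_def elim!: stuck_at_errorE)
    have "q = undo_stuck_at (apply_stuck_at p i s) j r"
      using q j by (simp add: eq undo_apply_stuck_at perms_def)
    moreover have "j = i \<or> j = partner (p ! i - s)"
    proof (cases "j = i")
      case False
      then have "p ! j = p ! i - s" using apply_stuck_at_collision[OF p q _ i j _ eq] s by simp
      moreover have "inj_on ((!) p) {..<N}" using p by (auto simp: perms_def inj_on_nth)
      ultimately show ?thesis unfolding partner_def using j by (metis inv_into_f_f lessThan_iff)
    qed simp
    ultimately have "q = F (i, s, j = i, r)" unfolding F_def by auto
    moreover have "(i, s, j = i, r) \<in> D" using i s r unfolding D_def by simp
    ultimately show "q \<in> F ` D" by blast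
  qed
  then have "card {q \<in> perms N. confusable (stuck_at_error t m) p q} \<le> card (F ` D)"
    by (rule card_mono[rotated]) (simp add: D_def)
  also have "\<dots> \<le> card D" by (rule card_image_le) (simp add: D_def)
  also have "\<dots> = 2 * N * t^2" by (simp add: D_def card_cartesian_product power2_eq_square)
  finally show ?thesis .
qed

lemma large_independent_subset_exists:
  assumes "finite S" "symp R" "\<And>x. x \<in> S \<Longrightarrow> card {y \<in> S. R x y} \<le> d"
  shows "\<exists>C \<subseteq> S. pairwise (\<lambda>x y. \<not> R x y) C \<and> card S \<le> Suc d * card C"
  using assms(1,3)
proof (induction S rule: finite_psubset_induct)
  case (psubset S)
  show ?case
  proof (cases "S = {}")
    case False
    then obtain x where x: "x \<in> S" by blast
    define Nx where "Nx = insert x {y \<in> S. R x y}"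
    have deg: "card {y \<in> S - Nx. R z y} \<le> d" if "z \<in> S - Nx" for z
    proof -
      have "card {y \<in> S - Nx. R z y} \<le> card {y \<in> S. R z y}"
        using psubset.hyps by (intro card_mono) auto
      also have "\<dots> \<le> d" using that by (intro psubset.prems) blast
      finally show ?thesis .
    qed
    have "S - Nx \<subset> S" using x by (auto simp: Nx_def)
    then obtain C where C: "C \<subseteq> S - Nx" "pairwise (\<lambda>x y. \<not> R x y) C"
      "card (S - Nx) \<le> Suc d * card C"
      using psubset.IH deg by meson
    have "finite C" "x \<notin> C" using C(1) psubset.hyps finite_subset by (auto simp: Nx_def)
    have "pairwise (\<lambda>x y. \<not> R x y) (insert x C)"
      using C(1,2) \<open>symp R\<close> by (auto simp: pairwise_insert Nx_def dest: sympD)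
    moreover have "card Nx \<le> Suc d"
      using psubset.hyps psubset.prems[OF x] by (simp add: Nx_def card_insert_if)
    then have "card S \<le> Suc d * card (insert x C)"
    proof -
      have "card S \<le> card (S - Nx) + card Nx"
        using card_Un_le[of Nx "S - Nx"] Diff_partition[of Nx S] x by (auto simp: Nx_def add.commute)
      with C(3) \<open>card Nx \<le> Suc d\<close> \<open>finite C\<close> \<open>x \<notin> C\<close> show ?thesis by simp
    qed
    moreover have "insert x C \<subseteq> S" using C(1) x by blast
    ultimately show ?thesis by blast
  qed simp
qed

lemma decoder_exists:
  assumes "inj_on E A" "pairwise (\<lambda>x y. \<not> confusable err x y) (E ` A)"
  shows "\<exists>D. \<forall>\<sigma> \<in> A. \<forall>z. err (E \<sigma>) z \<longrightarrow> D z = \<sigma>"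
proof (intro exI ballI allI impI)
  fix \<sigma> z assume \<sigma>: "\<sigma> \<in> A" and "err (E \<sigma>) z"
  define \<tau> where "\<tau> = (SOME \<tau>. \<tau> \<in> A \<and> err (E \<tau>) z)"
  have \<tau>: "\<tau> \<in> A \<and> err (E \<tau>) z"
    unfolding \<tau>_def using \<sigma> \<open>err (E \<sigma>) z\<close> by (rule someI[of _ \<sigma>, OF conjI])
  then have "confusable err (E \<sigma>) (E \<tau>)" using \<open>err (E \<sigma>) z\<close> by (auto simp: confusable_def)
  then have "E \<sigma> = E \<tau>" using assms(2) \<sigma> \<tau> by (auto simp: pairwise_def)
  then show "\<tau> = \<sigma>" using assms(1) \<sigma> \<tau> by (auto dest: inj_onD)
qed

lemma prod_int_interval_le_shifted:
  "(\<Prod>j\<in>{int n - int k + 1..int n}. j) \<le> int (\<Prod>{n+1..n+k})"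
proof (cases "k \<le> n")
  case True
  have "(\<Prod>j\<in>{int n - int k + 1..int n}. j) \<le> (\<Prod>j\<in>{int n - int k + 1..int n}. j + int k)"
    using True by (intro prod_mono) auto
  also have "\<dots> = (\<Prod>j\<in>(\<lambda>j. j + int k) ` {int n - int k + 1..int n}. j)"
    by (subst prod.reindex) (auto simp: inj_on_def)
  also have "(\<lambda>j. j + int k) ` {int n - int k + 1..int n} = int ` {n+1..n+k}"
    by (simp add: image_add_atLeastAtMost' image_int_atLeastAtMost algebra_simps)
  also have "(\<Prod>j\<in>int ` {n+1..n+k}. j) = int (\<Prod>{n+1..n+k})"
    by (subst prod.reindex) (auto simp: of_nat_prod)
  finally show ?thesis .
next
  case False
  then have "(\<Prod>j\<in>{int n - int k + 1..int n}. j) = 0" by (intro prod_zero bexI[of _ 0]) auto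
  then show ?thesis by (metis of_nat_0_le_iff)
qed

lemma fact_mult_Suc_le_fact_Suc_add:
  fixes d n k :: nat
  assumes "d < \<Prod>{n+1..n+k}"
  shows "fact n * Suc (Suc (n + k) * d) \<le> fact (Suc (n + k))"
proof -
  have "fact n * Suc (Suc (n + k) * d) \<le> fact n * (Suc (n + k) * Suc d)"
    by simp
  also have "\<dots> \<le> fact n * (Suc (n + k) * \<Prod>{Suc n..n+k})"
    using assms by (intro mult_le_mono2) (simp add: Suc_le_eq)
  also have "\<dots> = fact (Suc (n + k))"
    using fact_eq_fact_times[of n "n + k"] by (simp add: mult_ac)
  finally show ?thesis .
qed

theorem theorem3:
  fixes n t t' :: nat and m :: int
  assumes "n > 0" "t > 0" "t' > 0"
    and "n \<ge> t + 12"
    and "(\<Prod>j\<in>{int n - int t' + 1..int n}. j) \<ge> 2 * (int t + 2) * (2 * int t + 1) * (int t)^2"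
    and "m \<ge> 0"
  shows "\<exists>(E :: int list \<Rightarrow> int list) (D :: int list \<Rightarrow> int list).
           (\<forall>\<sigma>\<in>perms n. E \<sigma> \<in> perms (n + t' + 1)) \<and>
           (\<forall>\<sigma>\<in>perms n. \<forall>pe. stuck_at_error t m (E \<sigma>) pe \<longrightarrow> D pe = \<sigma>)"
proof -
  define N where "N = n + t' + 1"
  have "2 * (t + 2) * (2 * t + 1) * t^2 \<le> \<Prod>{n+1..n+t'}"
    using assms(5) prod_int_interval_le_shifted[of n t']
    by (subst of_nat_le_iff[where 'a = int, symmetric])
      (simp only: of_nat_mult of_nat_add of_nat_power of_nat_numeral of_nat_1)
  moreover have "2 * t^2 < 2 * (t + 2) * (2 * t + 1) * t^2" using \<open>t > 0\<close> by simp
  ultimately have "2 * t^2 < \<Prod>{n+1..n+t'}" by linarith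
  from fact_mult_Suc_le_fact_Suc_add[OF this]
  have "fact n * Suc (2 * N * t^2) \<le> fact N" by (simp only: N_def Suc_eq_plus1 mult.assoc mult.left_commute)
  moreover obtain C where C: "C \<subseteq> perms N"
    "pairwise (\<lambda>x y. \<not> confusable (stuck_at_error t m) x y) C"
    "card (perms N) \<le> Suc (2 * N * t^2) * card C"
    using large_independent_subset_exists[OF finite_perms symp_confusable card_confusable_perms_le]
    by blast
  ultimately have "fact n * Suc (2 * N * t^2) \<le> card C * Suc (2 * N * t^2)"
    unfolding card_perms by (metis le_trans mult.commute)
  then have "fact n \<le> card C" by (simp only: mult_le_cancel2)
  then obtain E where E: "E ` perms n \<subseteq> C" "inj_on E (perms n)"
    using card_le_inj[OF finite_perms finite_subset[OF C(1) finite_perms]] card_perms by metis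
  moreover obtain D where "\<forall>\<sigma> \<in> perms n. \<forall>pe. stuck_at_error t m (E \<sigma>) pe \<longrightarrow> D pe = \<sigma>"
    using decoder_exists[OF E(2) pairwise_subset[OF C(2) E(1)]] by blast
  ultimately show ?thesis using C(1) unfolding N_def by blast
qed

end
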